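(* Let $G$ be a finite simple undirected graph with adjacency matrix $A=\sum_{r=0}^d\theta_rE_r$ (spectral decomposition), let $a,b$ be vertices, let $w_1,\dots,w_k$ and integers $f^r_\ell$ be as in the context, so that $\theta_r=\sum_{\ell=1}^k f^r_\ell w_\ell$, and define $F:\mathbb{T}^k\to\mathbb{C}$ by $F(\overline{z})=\sum_{r=0}^d\langle a|E_r|b\rangle\,e^{\mathrm{i} f^r(\overline{z})}$. Then for every integer $\ell\ge1$ the number \[\frac{1}{(2\pi)^{k}}\int_{\mathbb{T}^k}|F(\overline{z})|^{2\ell}\,\mathrm{d}\overline{z}\] is rational.
   Context: Here $\theta_0,\dots,\theta_d$ are the distinct eigenvalues of $A$ and $E_r$ is the orthogonal projection onto the $\theta_r$-eigenspace. Fix real numbers $w_1,\dots,w_k$ that are linearly independent over $\mathbb{Q}$ and such that every $\theta_r$ is an integer linear combination $\theta_r=\sum_{\ell=1}^k f^r_\ell w_\ell$ with $f^r_\ell\in\mathbb{Z}$. For $\overline{z}=(z_1,\dots,z_k)$ write $f^r(\overline{z})=\sum_{\ell=1}^k f^r_\ell z_\ell$. $\mathbb{T}^k=\mathbb{R}^k/2\pi\mathbb{Z}^k$ is the $k$-torus with Lebesgue measure $\mathrm{d}\overline{z}$, of total volume $(2\pi)^k$. *)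

theory Defs
  imports "HOL-Analysis.Analysis"
begin

definition simple_graph :: "('n::finite \<Rightarrow> 'n \<Rightarrow> bool) \<Rightarrow> bool" where
  "simple_graph adj \<longleftrightarrow> (\<forall>x y. adj x y \<longleftrightarrow> adj y x) \<and> (\<forall>x. \<not> adj x x)"

definition adjacency_matrix :: "('n::finite \<Rightarrow> 'n \<Rightarrow> bool) \<Rightarrow> real^'n^'n" where
  "adjacency_matrix adj = (\<chi> x y. if adj x y then 1 else 0)"

definition spectral_decomposition ::
  "real^'n^'n \<Rightarrow> nat \<Rightarrow> (nat \<Rightarrow> real) \<Rightarrow> (nat \<Rightarrow> real^'n^'n) \<Rightarrow> bool" where
  "spectral_decomposition A d \<theta> E \<longleftrightarrow>
     inj_on \<theta> {..d} \<and>
     (\<forall>r\<le>d. E r \<noteq> 0 \<and> transpose (E r) = E r \<and> E r ** E r = E r) \<and>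
     (\<forall>r\<le>d. \<forall>s\<le>d. r \<noteq> s \<longrightarrow> E r ** E s = 0) \<and>
     (\<Sum>r\<le>d. E r) = mat 1 \<and>
     A = (\<Sum>r\<le>d. \<theta> r *\<^sub>R E r)"

definition rat_lin_indep :: "('k::finite \<Rightarrow> real) \<Rightarrow> bool" where
  "rat_lin_indep w \<longleftrightarrow>
     (\<forall>q::'k \<Rightarrow> real. (\<forall>l. q l \<in> \<rat>) \<longrightarrow> (\<Sum>l\<in>UNIV. q l * w l) = 0 \<longrightarrow> (\<forall>l. q l = 0))"

end

theory Submission imports Defs "Jordan_Normal_Form.Char_Poly" begin

text \<open>Expanding \<open>|F|^(2m) = F^m (cnj F)^m\<close> turns the integrand into a finite combination
  of torus characters \<open>exp (i V\<cdot>z)\<close>, indexed by tuples \<open>t \<in> {0..d}^(2m)\<close>, with integer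
  frequency \<open>V t\<close> and coefficient \<open>W t = \<Prod>k. <a|E_(t k)|b>\<close>. Integration keeps the tuples
  with \<open>V t = 0\<close>, which by the linear independence of the \<open>w_l\<close> are those whose signed
  eigenvalue sum \<open>D t = \<Sum>k. \<plusminus>\<theta>_(t k)\<close> vanishes. Every \<open>D t\<close> is an eigenvalue of a
  Kronecker sum of copies of the integer matrix \<open>A\<close>, hence algebraic, so one integer
  polynomial \<open>g\<close> with \<open>g 0 \<noteq> 0\<close> vanishes at all nonzero \<open>D t\<close>. The moment therefore equals
  \<open>(\<Sum>t. W t * g (D t)) / g 0\<close>, whose numerator is an integer combination of the moments
  \<open>\<Sum>t. W t * D t ^ p\<close>; by the binomial theorem these are built from the integers
  \<open>\<Sum>r. <a|E_r|b> * \<theta>_r ^ q = (A ^ q)_ab\<close>.\<close>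

no_notation Matrix.vec_index (infixl \<open>$\<close> 100)
no_notation Matrix.scalar_prod (infix \<open>\<bullet>\<close> 70)

lemma integral_exp_int_period:
  fixes n :: int
  shows "integrable lborel (\<lambda>t. indicator {0..2*pi} t *\<^sub>R exp (\<i> * complex_of_real (of_int n * t)))"
    and "integral\<^sup>L lborel (\<lambda>t. indicator {0..2*pi} t *\<^sub>R exp (\<i> * complex_of_real (of_int n * t)))
           = (if n = 0 then complex_of_real (2*pi) else 0)"
proof -
  have cont: "continuous_on {0..2*pi} (\<lambda>t. exp (\<i> * complex_of_real (of_int n * t)))"
    by (intro continuous_intros)
  show "integrable lborel (\<lambda>t. indicator {0..2*pi} t *\<^sub>R exp (\<i> * complex_of_real (of_int n * t)))"
    using borel_integrable_atLeastAtMost'[OF cont] unfolding set_integrable_def .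
  show "integral\<^sup>L lborel (\<lambda>t. indicator {0..2*pi} t *\<^sub>R exp (\<i> * complex_of_real (of_int n * t)))
          = (if n = 0 then complex_of_real (2*pi) else 0)"
  proof (cases "n = 0")
    case True
    have "integral\<^sup>L lborel (\<lambda>t. indicator {0..2*pi} t *\<^sub>R exp (\<i> * complex_of_real (of_int n * t)))
        = complex_of_real (2*pi) - complex_of_real 0"
      by (rule integral_FTC_atLeastAtMost)
         (auto simp: True intro!: derivative_eq_intros continuous_intros)
    then show ?thesis using True by simp
  next
    case False
    define G where "G x = exp (\<i> * of_int n * x) / (\<i> * of_int n)" for x :: complex
    have "integral\<^sup>L lborel (\<lambda>t. indicator {0..2*pi} t *\<^sub>R exp (\<i> * complex_of_real (of_int n * t)))
        = G (of_real (2*pi)) - G (of_real 0)"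
    proof (rule integral_FTC_atLeastAtMost)
      fix x :: real
      have "(G has_field_derivative exp (\<i> * complex_of_real (of_int n * x))) (at (of_real x))"
        unfolding G_def using False by (auto intro!: derivative_eq_intros simp: mult_ac)
      then show "((\<lambda>x. G (of_real x)) has_vector_derivative exp (\<i> * complex_of_real (of_int n * x)))
          (at x within {0..2*pi})"
        by (rule has_vector_derivative_real_field)
    qed (use cont in auto)
    also have "exp (\<i> * of_int n * of_real (2*pi)) = 1"
      using exp_integer_2pi[of "of_int n"] by (simp add: mult_ac)
    then have "G (of_real (2*pi)) - G (of_real 0) = 0"
      by (simp add: G_def)
    finally show ?thesis using False by simp
  qed
qed

lemma
  fixes g :: "'a::euclidean_space \<Rightarrow> real \<Rightarrow> 'b::{real_normed_field, banach, second_countable_topology}"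
  assumes int: "\<And>b. b \<in> Basis \<Longrightarrow> integrable lborel (g b)"
  shows integrable_lborel_prod_Basis: "integrable lborel (\<lambda>x::'a. \<Prod>b\<in>Basis. g b (x \<bullet> b))"
    and integral_lborel_prod_Basis:
      "integral\<^sup>L lborel (\<lambda>x::'a. \<Prod>b\<in>Basis. g b (x \<bullet> b)) = (\<Prod>b\<in>Basis. integral\<^sup>L lborel (g b))"
proof -
  interpret product_sigma_finite "\<lambda>_::'a. lborel :: real measure" ..
  have [measurable]: "g b \<in> borel_measurable borel" if "b \<in> Basis" for b
    using int[OF that] by (simp add: borel_measurable_integrable)
  have sum_Basis: "(\<lambda>f. \<Sum>b\<in>Basis. f b *\<^sub>R b :: 'a) \<in> measurable (Pi\<^sub>M Basis (\<lambda>_. lborel)) borel"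
    by measurable
  have prod_meas: "(\<lambda>x::'a. \<Prod>b\<in>Basis. g b (x \<bullet> b)) \<in> borel_measurable borel"
    by measurable
  have coord: "(\<Sum>b'\<in>Basis. f b' *\<^sub>R b' :: 'a) \<bullet> b = f b" if "b \<in> Basis" for f b
    using that by (simp add: inner_sum_left inner_Basis if_distrib cong: if_cong)
  have "integrable (Pi\<^sub>M Basis (\<lambda>_. lborel)) (\<lambda>f. \<Prod>b\<in>Basis. g b (f b))"
    by (rule product_integrable_prod) (auto intro: int)
  then show "integrable lborel (\<lambda>x::'a. \<Prod>b\<in>Basis. g b (x \<bullet> b))"
    by (subst lborel_eq, subst integrable_distr_eq[OF sum_Basis prod_meas]) (simp add: coord)
  have "integral\<^sup>L lborel (\<lambda>x::'a. \<Prod>b\<in>Basis. g b (x \<bullet> b))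
      = integral\<^sup>L (Pi\<^sub>M Basis (\<lambda>_. lborel)) (\<lambda>f. \<Prod>b\<in>Basis. g b (f b))"
    by (subst lborel_eq, subst integral_distr[OF sum_Basis prod_meas]) (simp add: coord)
  also have "\<dots> = (\<Prod>b\<in>Basis. integral\<^sup>L lborel (g b))"
    by (rule product_integral_prod) (auto intro: int)
  finally show "integral\<^sup>L lborel (\<lambda>x::'a. \<Prod>b\<in>Basis. g b (x \<bullet> b)) = (\<Prod>b\<in>Basis. integral\<^sup>L lborel (g b))" .
qed

lemma has_integral_torus_character:
  fixes u :: "'k::finite \<Rightarrow> int"
  shows "((\<lambda>z. exp (\<i> * complex_of_real (\<Sum>l\<in>UNIV. of_int (u l) * z $ l))) has_integral
           (if \<forall>l. u l = 0 then complex_of_real ((2*pi) ^ CARD('k)) else 0))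
         (cbox (0::real^'k) (\<chi> _. 2*pi))"
proof -
  define h where "h l t = indicator {0..2*pi} t *\<^sub>R exp (\<i> * complex_of_real (of_int (u l) * t))"
    for l t
  define g where "g b = h (SOME l. b = axis l (1::real))" for b :: "real^'k"
  have g_axis: "g (axis l 1) = h l" for l
    unfolding g_def by (rule arg_cong[where f=h]) (auto simp: axis_eq_axis)
  have Basis_axis: "(Basis :: (real^'k) set) = range (\<lambda>l. axis l 1)"
    by (auto simp: Basis_vec_def)
  have inj_axis: "inj (\<lambda>l::'k. axis l (1::real))"
    by (auto simp: inj_def axis_eq_axis)
  have prod_Basis: "(\<Prod>b\<in>Basis. g b (x \<bullet> b)) = (\<Prod>l\<in>UNIV. h l (x $ l))" for x :: "real^'k"
    by (simp add: Basis_axis prod.reindex[OF inj_axis] g_axis inner_axis)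
  have int_g: "integrable lborel (g b)" if "b \<in> Basis" for b
    using that integral_exp_int_period(1) by (auto simp: Basis_axis g_axis h_def[abs_def])
  have int_h: "integrable lborel (\<lambda>x::real^'k. \<Prod>l\<in>UNIV. h l (x $ l))"
    using integrable_lborel_prod_Basis[of g, OF int_g] by (simp add: prod_Basis)
  have "integral\<^sup>L lborel (\<lambda>x::real^'k. \<Prod>l\<in>UNIV. h l (x $ l)) = (\<Prod>b\<in>Basis. integral\<^sup>L lborel (g b))"
    using integral_lborel_prod_Basis[of g, OF int_g] by (simp add: prod_Basis)
  also have "\<dots> = (\<Prod>l\<in>UNIV. integral\<^sup>L lborel (h l))"
    by (simp add: Basis_axis prod.reindex[OF inj_axis] g_axis)
  also have "\<dots> = (\<Prod>l\<in>UNIV. if u l = 0 then complex_of_real (2*pi) else 0)"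
    unfolding h_def using integral_exp_int_period(2) by simp
  also have "\<dots> = (if \<forall>l. u l = 0 then complex_of_real ((2*pi) ^ CARD('k)) else 0)"
    by auto
  finally have "((\<lambda>x::real^'k. \<Prod>l\<in>UNIV. h l (x $ l)) has_integral
      (if \<forall>l. u l = 0 then complex_of_real ((2*pi) ^ CARD('k)) else 0)) UNIV"
    using has_integral_integral_lborel[OF int_h] by simp
  moreover have h_restrict: "(\<Prod>l\<in>UNIV. h l (x $ l)) = (if x \<in> cbox (0::real^'k) (\<chi> _. 2*pi)
      then exp (\<i> * complex_of_real (\<Sum>l\<in>UNIV. of_int (u l) * x $ l)) else 0)" for x
  proof -
    have "(\<Prod>l\<in>UNIV. h l (x $ l)) = (\<Prod>l\<in>UNIV. (indicator {0..2*pi} (x $ l) :: complex)) *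
        (\<Prod>l\<in>UNIV. exp (\<i> * complex_of_real (of_int (u l) * x $ l)))"
      unfolding prod.distrib[symmetric]
      by (intro prod.cong refl) (simp add: h_def scaleR_conv_of_real indicator_def)
    also have "(\<Prod>l\<in>UNIV. exp (\<i> * complex_of_real (of_int (u l) * x $ l)))
        = exp (\<i> * complex_of_real (\<Sum>l\<in>UNIV. of_int (u l) * x $ l))"
      by (simp add: exp_sum[symmetric] sum_distrib_left)
    also have "(\<Prod>l\<in>UNIV. (indicator {0..2*pi} (x $ l) :: complex))
        = (if x \<in> cbox (0::real^'k) (\<chi> _. 2*pi) then 1 else 0)"
      by (auto simp: mem_box_cart indicator_def)
    finally show ?thesis by simp
  qed
  ultimately show ?thesis
    by (simp only: h_restrict has_integral_restrict_UNIV)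
qed

definition moment_sign :: "nat \<Rightarrow> nat \<Rightarrow> int" where
  "moment_sign m k = (if k < m then 1 else -1)"

lemma cmod_power_exp_sum_expand:
  fixes c \<phi> :: "'r \<Rightarrow> real"
  assumes "finite R"
  shows "complex_of_real (cmod (\<Sum>r\<in>R. complex_of_real (c r) * exp (\<i> * complex_of_real (\<phi> r))) ^ (2*m))
       = (\<Sum>t\<in>PiE {..<2*m} (\<lambda>_. R). complex_of_real (\<Prod>k<2*m. c (t k)) *
            exp (\<i> * complex_of_real (\<Sum>k<2*m. of_int (moment_sign m k) * \<phi> (t k))))"
proof -
  define F where "F = (\<Sum>r\<in>R. complex_of_real (c r) * exp (\<i> * complex_of_real (\<phi> r)))"
  define G where "G k = (\<Sum>r\<in>R. complex_of_real (c r) *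
      exp (\<i> * complex_of_real (of_int (moment_sign m k) * \<phi> r)))" for k
  have "complex_of_real (cmod F ^ (2*m)) = (F * cnj F) ^ m"
    by (simp add: power_mult complex_norm_square[symmetric])
  also have "\<dots> = (\<Prod>k<m. G k) * (\<Prod>k\<in>{m..<2*m}. G k)"
    by (simp add: power_mult_distrib G_def F_def moment_sign_def exp_cnj)
  also have "\<dots> = (\<Prod>k<2*m. G k)"
    by (subst prod.union_disjoint[symmetric]) (auto intro: prod.cong)
  also have "\<dots> = (\<Sum>t\<in>PiE {..<2*m} (\<lambda>_. R). \<Prod>k<2*m. complex_of_real (c (t k)) *
      exp (\<i> * complex_of_real (of_int (moment_sign m k) * \<phi> (t k))))"
    unfolding G_def by (rule prod_sum_PiE) (use assms in auto)
  also have "\<dots> = (\<Sum>t\<in>PiE {..<2*m} (\<lambda>_. R). complex_of_real (\<Prod>k<2*m. c (t k)) *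
      exp (\<i> * complex_of_real (\<Sum>k<2*m. of_int (moment_sign m k) * \<phi> (t k))))"
    by (simp add: prod.distrib exp_sum sum_distrib_left)
  finally show ?thesis unfolding F_def .
qed

lemma torus_moment_eq_zero_frequency_sum:
  fixes c :: "'r \<Rightarrow> real" and f :: "'r \<Rightarrow> 'k::finite \<Rightarrow> int"
  assumes "finite R"
  shows "integral (cbox (0::real^'k) (\<chi> _. 2*pi))
      (\<lambda>z. cmod (\<Sum>r\<in>R. complex_of_real (c r) *
         exp (\<i> * complex_of_real (\<Sum>l\<in>UNIV. of_int (f r l) * z $ l))) ^ (2*m))
    = (2*pi) ^ CARD('k) * (\<Sum>t\<in>PiE {..<2*m} (\<lambda>_. R).
         if \<forall>l. (\<Sum>k<2*m. moment_sign m k * f (t k) l) = 0 then \<Prod>k<2*m. c (t k) else 0)"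
proof -
  define T where "T = PiE {..<2*m} (\<lambda>_. R)"
  define W where "W t = (\<Prod>k<2*m. c (t k))" for t
  define V where "V t l = (\<Sum>k<2*m. moment_sign m k * f (t k) l)" for t l
  define I where "I t = (if \<forall>l. V t l = 0 then complex_of_real ((2*pi) ^ CARD('k)) else 0)" for t
  define F where "F z = (\<Sum>r\<in>R. complex_of_real (c r) *
      exp (\<i> * complex_of_real (\<Sum>l\<in>UNIV. of_int (f r l) * z $ l)))" for z :: "real^'k"
  have expand: "complex_of_real (cmod (F z) ^ (2*m))
      = (\<Sum>t\<in>T. complex_of_real (W t) * exp (\<i> * complex_of_real (\<Sum>l\<in>UNIV. of_int (V t l) * z $ l)))"
    for z
  proof -
    have "(\<Sum>k<2*m. of_int (moment_sign m k) * (\<Sum>l\<in>UNIV. of_int (f (t k) l) * z $ l))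
        = (\<Sum>l\<in>UNIV. of_int (V t l) * z $ l)" for t
      by (simp add: V_def sum_distrib_left sum_distrib_right mult_ac) (rule sum.swap)
    then show ?thesis
      unfolding F_def cmod_power_exp_sum_expand[OF assms] T_def W_def by simp
  qed
  have "((\<lambda>z. complex_of_real (cmod (F z) ^ (2*m))) has_integral (\<Sum>t\<in>T. complex_of_real (W t) * I t))
      (cbox 0 (\<chi> _. 2*pi))"
    unfolding expand I_def
    by (intro has_integral_sum has_integral_mult_right has_integral_torus_character)
       (simp add: T_def assms finite_PiE)
  from has_integral_linear[OF this bounded_linear_Re]
  have "integral (cbox 0 (\<chi> _. 2*pi)) (\<lambda>z. cmod (F z) ^ (2*m)) = Re (\<Sum>t\<in>T. complex_of_real (W t) * I t)"
    by (intro integral_unique) (simp add: o_def)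
  also have "\<dots> = (2*pi) ^ CARD('k) * (\<Sum>t\<in>T. if \<forall>l. V t l = 0 then W t else 0)"
    by (auto simp: I_def Re_sum sum_distrib_left intro!: sum.cong)
  finally show ?thesis
    unfolding F_def T_def V_def W_def .
qed

lemma rat_lin_indep_int_combination_eq_0_iff:
  fixes w :: "'k::finite \<Rightarrow> real" and u :: "'k \<Rightarrow> int"
  assumes "rat_lin_indep w"
  shows "(\<Sum>l\<in>UNIV. of_int (u l) * w l) = 0 \<longleftrightarrow> (\<forall>l. u l = 0)"
proof
  assume "(\<Sum>l\<in>UNIV. of_int (u l) * w l) = 0"
  then have "\<forall>l. real_of_int (u l) = 0"
    using assms unfolding rat_lin_indep_def by (metis Rats_of_int)
  then show "\<forall>l. u l = 0" by simp
qed simp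

lemma normalized_torus_moment_eq_resonant_sum:
  fixes c \<theta> :: "'r \<Rightarrow> real" and f :: "'r \<Rightarrow> 'k::finite \<Rightarrow> int" and w :: "'k \<Rightarrow> real"
  assumes R: "finite R" and w: "rat_lin_indep w"
    and \<theta>: "\<And>r. r \<in> R \<Longrightarrow> \<theta> r = (\<Sum>l\<in>UNIV. of_int (f r l) * w l)"
  shows "(1 / (2*pi) ^ CARD('k)) * integral (cbox (0::real^'k) (\<chi> _. 2*pi))
      (\<lambda>z. cmod (\<Sum>r\<in>R. complex_of_real (c r) *
         exp (\<i> * complex_of_real (\<Sum>l\<in>UNIV. of_int (f r l) * z $ l))) ^ (2*m))
    = (\<Sum>t\<in>PiE {..<2*m} (\<lambda>_. R).
         if (\<Sum>k<2*m. of_int (moment_sign m k) * \<theta> (t k)) = 0 then \<Prod>k<2*m. c (t k) else 0)"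
proof -
  have resonance: "(\<forall>l. (\<Sum>k<2*m. moment_sign m k * f (t k) l) = 0)
      \<longleftrightarrow> (\<Sum>k<2*m. of_int (moment_sign m k) * \<theta> (t k)) = 0"
    if "t \<in> PiE {..<2*m} (\<lambda>_. R)" for t
  proof -
    have "(\<Sum>k<2*m. of_int (moment_sign m k) * \<theta> (t k))
        = (\<Sum>k<2*m. of_int (moment_sign m k) * (\<Sum>l\<in>UNIV. of_int (f (t k) l) * w l))"
      using that \<theta> by (intro sum.cong refl) (auto simp: PiE_iff)
    also have "\<dots> = (\<Sum>l\<in>UNIV. of_int (\<Sum>k<2*m. moment_sign m k * f (t k) l) * w l)"
      by (simp add: sum_distrib_left sum_distrib_right mult_ac) (rule sum.swap)
    finally show ?thesis
      using rat_lin_indep_int_combination_eq_0_iff[OF w, of "\<lambda>l. \<Sum>k<2*m. moment_sign m k * f (t k) l"]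
      by (simp only:)
  qed
  have "(\<Sum>t\<in>PiE {..<2*m} (\<lambda>_. R).
      if \<forall>l. (\<Sum>k<2*m. moment_sign m k * f (t k) l) = 0 then \<Prod>k<2*m. c (t k) else 0)
    = (\<Sum>t\<in>PiE {..<2*m} (\<lambda>_. R).
      if (\<Sum>k<2*m. of_int (moment_sign m k) * \<theta> (t k)) = 0 then \<Prod>k<2*m. c (t k) else 0)"
    using resonance by (intro sum.cong refl) auto
  then show ?thesis
    unfolding torus_moment_eq_zero_frequency_sum[OF R] by simp
qed

lemma algebraic_eigenvalue_of_int_matrix:
  fixes U :: "'u set" and M :: "'u \<Rightarrow> 'u \<Rightarrow> int" and v :: "'u \<Rightarrow> 'a::field_char_0"
  assumes U: "finite U" and u0: "u0 \<in> U" "v u0 \<noteq> 0"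
    and eigen: "\<And>u. u \<in> U \<Longrightarrow> (\<Sum>u'\<in>U. of_int (M u u') * v u') = \<mu> * v u"
  shows "algebraic \<mu>"
proof -
  define n where "n = card U"
  define e where "e = from_nat_into U"
  have e: "bij_betw e {..<n} U"
    unfolding e_def n_def by (rule bij_betw_from_nat_into_finite[OF U])
  define M_int where "M_int = Matrix.mat n n (\<lambda>(i, j). M (e i) (e j))"
  define M_lift where "M_lift = map_mat (of_int :: int \<Rightarrow> 'a) M_int"
  have M_int: "M_int \<in> carrier_mat n n" and M_lift: "M_lift \<in> carrier_mat n n"
    unfolding M_int_def M_lift_def by simp_all
  define v_lift where "v_lift = Matrix.vec n (\<lambda>i. v (e i))"
  obtain i0 where i0: "i0 < n" "e i0 = u0"
    using e u0 unfolding bij_betw_def by auto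
  have "eigenvector M_lift v_lift \<mu>"
    unfolding eigenvector_def
  proof (intro conjI)
    show "v_lift \<in> carrier_vec (dim_row M_lift)"
      using M_lift unfolding v_lift_def by simp
    show "v_lift \<noteq> 0\<^sub>v (dim_row M_lift)"
    proof
      assume "v_lift = 0\<^sub>v (dim_row M_lift)"
      then have "vec_index v_lift i0 = 0"
        using i0 M_lift by simp
      then show False
        using i0 u0 unfolding v_lift_def by simp
    qed
    show "M_lift *\<^sub>v v_lift = \<mu> \<cdot>\<^sub>v v_lift"
    proof (rule eq_vecI)
      fix i assume "i < dim_vec (\<mu> \<cdot>\<^sub>v v_lift)"
      then have i: "i < n" unfolding v_lift_def by simp
      have "vec_index (M_lift *\<^sub>v v_lift) i = (\<Sum>j<n. of_int (M (e i) (e j)) * v (e j))"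
        using i M_lift unfolding v_lift_def M_lift_def M_int_def by (simp add: scalar_prod_def lessThan_atLeast0)
      also have "\<dots> = (\<Sum>u'\<in>U. of_int (M (e i) u') * v u')"
        by (rule sum.reindex_bij_betw[OF e])
      also have "\<dots> = \<mu> * v (e i)"
        using eigen e i unfolding bij_betw_def by auto
      finally show "vec_index (M_lift *\<^sub>v v_lift) i = vec_index (\<mu> \<cdot>\<^sub>v v_lift) i"
        using i unfolding v_lift_def by simp
    qed (use M_lift in \<open>simp add: v_lift_def\<close>)
  qed
  then have "poly (char_poly M_lift) \<mu> = 0"
    using eigenvalue_root_char_poly[OF M_lift] unfolding eigenvalue_def by blast
  moreover have "char_poly M_lift = map_poly of_int (char_poly M_int)"
    unfolding M_lift_def by (rule of_int_hom.char_poly_hom[OF M_int])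
  moreover have "char_poly M_int \<noteq> 0"
    using degree_monic_char_poly[OF M_int] by auto
  ultimately show ?thesis
    by (intro algebraicI[of "map_poly of_int (char_poly M_int)"]) (auto simp: coeff_map_poly)
qed

lemma sum_PiE_agree_except:
  assumes "u \<in> PiE I S" "k \<in> I"
  shows "(\<Sum>u'\<in>{u' \<in> PiE I S. \<forall>j\<in>I - {k}. u' j = u j}. g u') = (\<Sum>y\<in>S k. g (u(k := y)))"
proof -
  have "u(k := u' k) = u'" if u': "u' \<in> PiE I S" "\<forall>j\<in>I - {k}. u' j = u j" for u'
  proof
    fix j
    show "(u(k := u' k)) j = u' j"
      using assms u' by (cases "j \<in> I") (auto simp: PiE_def extensional_def)
  qed
  then show ?thesis
    by (intro sum.reindex_bij_witness[of _ "\<lambda>y. u(k := y)" "\<lambda>u'. u' k"])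
       (use assms in \<open>auto simp: PiE_def extensional_def\<close>)
qed

lemma act_on_tensor_factor:
  fixes A :: "real^'n^'n" and v :: "nat \<Rightarrow> real^'n"
  assumes eigen: "A *v v k = \<mu> *\<^sub>R v k" and k: "k < N"
    and u: "u \<in> PiE {..<N} (\<lambda>_. UNIV)"
  shows "(\<Sum>u'\<in>{u' \<in> PiE {..<N} (\<lambda>_. UNIV). \<forall>j\<in>{..<N} - {k}. u' j = u j}.
      A $ u k $ u' k * (\<Prod>j<N. v j $ u' j)) = \<mu> * (\<Prod>j<N. v j $ u j)"
proof -
  define R where "R = (\<Prod>j\<in>{..<N} - {k}. v j $ u j)"
  have upd: "(\<Prod>j<N. v j $ (u(k := y)) j) = v k $ y * R" for y
    unfolding R_def using k by (subst prod.remove[of _ k]) (auto intro!: prod.cong)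
  have "(\<Sum>u'\<in>{u' \<in> PiE {..<N} (\<lambda>_. UNIV). \<forall>j\<in>{..<N} - {k}. u' j = u j}.
      A $ u k $ u' k * (\<Prod>j<N. v j $ u' j)) = (\<Sum>y\<in>UNIV. A $ u k $ y * (\<Prod>j<N. v j $ (u(k := y)) j))"
    using sum_PiE_agree_except[OF u, of k "\<lambda>u'. A $ u k $ u' k * (\<Prod>j<N. v j $ u' j)"] k by simp
  also have "\<dots> = (A *v v k) $ u k * R"
    unfolding upd by (simp add: matrix_vector_mult_def sum_distrib_left sum_distrib_right mult_ac)
  also have "\<dots> = \<mu> * (\<Prod>j<N. v j $ u j)"
    using upd[of "u k"] by (simp add: eigen)
  finally show ?thesis .
qed

text \<open>\<open>\<Sum>k. s k * \<mu> k\<close> is an eigenvalue of the Kronecker sum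
  \<open>\<Sum>k. s k * (I \<otimes> \<dots> \<otimes> A \<otimes> \<dots> \<otimes> I)\<close> (with \<open>A\<close> in position \<open>k\<close>), an integer matrix
  indexed by \<open>N\<close>-tuples of indices, with eigenvector \<open>v 0 \<otimes> \<dots> \<otimes> v (N - 1)\<close>.\<close>

lemma algebraic_int_combination_of_eigenvalues:
  fixes A :: "real^'n^'n" and v :: "nat \<Rightarrow> real^'n" and \<mu> :: "nat \<Rightarrow> real" and s :: "nat \<Rightarrow> int"
  assumes A_int: "\<And>x y. A $ x $ y \<in> \<int>"
    and eigen: "\<And>k. k < N \<Longrightarrow> A *v v k = \<mu> k *\<^sub>R v k"
    and nonzero: "\<And>k. k < N \<Longrightarrow> v k \<noteq> 0"
  shows "algebraic (\<Sum>k<N. of_int (s k) * \<mu> k)"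
proof -
  have "\<exists>x. v k $ x \<noteq> 0" if "k < N" for k
    using nonzero[OF that] by (metis Finite_Cartesian_Product.vec_eq_iff Finite_Cartesian_Product.zero_index)
  then obtain x where x: "\<And>k. k < N \<Longrightarrow> v k $ x k \<noteq> 0"
    by metis
  define U where "U = PiE {..<N} (\<lambda>_. UNIV :: 'n set)"
  define agree_except where "agree_except k u u' \<longleftrightarrow> (\<forall>j\<in>{..<N} - {k}. u' j = u j)"
    for k and u u' :: "nat \<Rightarrow> 'n"
  define M where "M u u' = (\<Sum>k<N. s k * (if agree_except k u u' then \<lfloor>A $ u k $ u' k\<rfloor> else 0))"
    for u u' :: "nat \<Rightarrow> 'n"
  define V where "V u = (\<Prod>k<N. v k $ u k)" for u :: "nat \<Rightarrow> 'n"
  have floor_A: "real_of_int \<lfloor>A $ x $ y\<rfloor> = A $ x $ y" for x y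
    using A_int[of x y] by (metis Ints_cases floor_of_int)
  have row_k: "(\<Sum>u'\<in>{u' \<in> U. agree_except k u u'}. A $ u k $ u' k * V u') = \<mu> k * V u"
    if u: "u \<in> U" and k: "k < N" for u k
    using act_on_tensor_factor[of A v k "\<mu> k" N u, OF eigen[OF k] k] u unfolding U_def agree_except_def V_def by simp
  have "(\<Sum>u'\<in>U. of_int (M u u') * V u') = (\<Sum>k<N. of_int (s k) * \<mu> k) * V u" if "u \<in> U" for u
  proof -
    have "(\<Sum>u'\<in>U. of_int (M u u') * V u') = (\<Sum>u'\<in>U. \<Sum>k<N.
        of_int (s k) * (if agree_except k u u' then A $ u k $ u' k * V u' else 0))"
      by (intro sum.cong refl) (auto simp: M_def sum_distrib_right floor_A intro!: sum.cong)
    also have "\<dots> = (\<Sum>k<N. of_int (s k) * (\<Sum>u'\<in>{u' \<in> U. agree_except k u u'}. A $ u k $ u' k * V u'))"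
      by (subst sum.swap) (simp add: sum.inter_filter U_def finite_PiE sum_distrib_left)
    also have "\<dots> = (\<Sum>k<N. of_int (s k) * \<mu> k) * V u"
      using row_k[OF that] by (simp add: sum_distrib_left sum_distrib_right mult_ac)
    finally show ?thesis .
  qed
  moreover have "restrict x {..<N} \<in> U" "V (restrict x {..<N}) \<noteq> 0"
    using x by (auto simp: U_def V_def)
  ultimately show ?thesis
    by (intro algebraic_eigenvalue_of_int_matrix[of U "restrict x {..<N}" V M]) (auto simp: U_def finite_PiE)
qed

lemma spectral_decomposition_mult_projection:
  assumes sd: "spectral_decomposition A d \<theta> E" and r: "r \<le> d"
  shows "A ** E r = \<theta> r *\<^sub>R E r"
proof -
  have A: "A = (\<Sum>s\<le>d. \<theta> s *\<^sub>R E s)"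
    and orth: "\<And>s. s \<le> d \<Longrightarrow> s \<noteq> r \<Longrightarrow> E s ** E r = 0"
    and idem: "E r ** E r = E r"
    using sd r unfolding spectral_decomposition_def by auto
  have "(A ** E r) $ x $ y = (\<Sum>s\<le>d. \<theta> s * (E s ** E r) $ x $ y)" for x y
    by (simp add: A matrix_matrix_mult_def sum_component sum_distrib_left sum_distrib_right
        sum.swap[of _ UNIV] mult_ac)
  also have "\<dots> x y = (\<Sum>s\<le>d. if s = r then \<theta> r * E r $ x $ y else 0)" for x y
    by (intro sum.cong refl) (auto simp: orth idem)
  finally have "(A ** E r) $ x $ y = (\<theta> r *\<^sub>R E r) $ x $ y" for x y
    using r by simp
  then show ?thesis
    by (simp add: Finite_Cartesian_Product.vec_eq_iff)
qed

lemma spectral_decomposition_has_eigenvector: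
  assumes sd: "spectral_decomposition A d \<theta> E" and r: "r \<le> d"
  shows "\<exists>v. v \<noteq> 0 \<and> A *v v = \<theta> r *\<^sub>R v"
proof -
  have "E r \<noteq> 0"
    using sd r unfolding spectral_decomposition_def by blast
  then obtain x b where "E r $ x $ b \<noteq> 0"
    by (auto simp: Finite_Cartesian_Product.vec_eq_iff)
  then have "column b (E r) \<noteq> 0"
    by (auto simp: column_def Finite_Cartesian_Product.vec_eq_iff)
  moreover have "A *v column b (E r) = \<theta> r *\<^sub>R column b (E r)"
    using spectral_decomposition_mult_projection[OF sd r]
    by (auto simp: column_def matrix_vector_mult_def matrix_matrix_mult_def Finite_Cartesian_Product.vec_eq_iff)
  ultimately show ?thesis by blast
qed

lemma spectral_decomposition_algebraic_int_combination:
  fixes A :: "real^'n^'n" and s :: "nat \<Rightarrow> int"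
  assumes sd: "spectral_decomposition A d \<theta> E" and A_int: "\<And>x y. A $ x $ y \<in> \<int>"
    and t: "\<And>k. k < N \<Longrightarrow> t k \<le> d"
  shows "algebraic (\<Sum>k<N. of_int (s k) * \<theta> (t k))"
proof -
  have "\<forall>r. \<exists>v. r \<le> d \<longrightarrow> v \<noteq> 0 \<and> A *v v = \<theta> r *\<^sub>R v"
    using spectral_decomposition_has_eigenvector[OF sd] by blast
  from choice[OF this] obtain v where v: "\<forall>r. r \<le> d \<longrightarrow> v r \<noteq> 0 \<and> A *v v r = \<theta> r *\<^sub>R v r"
    by blast
  show ?thesis
    using v t by (intro algebraic_int_combination_of_eigenvalues[OF A_int, of N "\<lambda>k. v (t k)"]) auto
qed

lemma spectral_decomposition_moment_in_Ints:
  fixes A :: "real^'n^'n"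
  assumes sd: "spectral_decomposition A d \<theta> E" and A_int: "\<And>x y. A $ x $ y \<in> \<int>"
  shows "(\<Sum>r\<le>d. E r $ x $ y * \<theta> r ^ q) \<in> \<int>"
proof (induction q arbitrary: x)
  case 0
  have "(\<Sum>r\<le>d. E r) = Finite_Cartesian_Product.mat 1"
    using sd unfolding spectral_decomposition_def by auto
  then have "(\<Sum>r\<le>d. E r $ x $ y) = (Finite_Cartesian_Product.mat 1 :: real^'n^'n) $ x $ y"
    by (metis sum_component)
  then show ?case
    by (simp add: Finite_Cartesian_Product.mat_def)
next
  case (Suc q)
  have "(\<Sum>r\<le>d. E r $ x $ y * \<theta> r ^ Suc q) = (\<Sum>r\<le>d. (A ** E r) $ x $ y * \<theta> r ^ q)"
    using spectral_decomposition_mult_projection[OF sd] by (intro sum.cong refl) (simp add: mult_ac)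
  also have "\<dots> = (\<Sum>z\<in>UNIV. A $ x $ z * (\<Sum>r\<le>d. E r $ z $ y * \<theta> r ^ q))"
    by (simp add: matrix_matrix_mult_def sum_distrib_left sum_distrib_right mult_ac sum.swap[of _ UNIV])
  also have "\<dots> \<in> \<int>"
    by (intro Ints_sum Ints_mult A_int Suc)
  finally show ?case .
qed

lemma sum_PiE_prod_power_sum_in_Ints:
  fixes c \<theta> :: "'r \<Rightarrow> 'a::comm_ring_1" and s :: "'i \<Rightarrow> int"
  assumes "finite K" "finite R"
    and moments: "\<And>q. (\<Sum>r\<in>R. c r * \<theta> r ^ q) \<in> \<int>"
  shows "(\<Sum>t\<in>PiE K (\<lambda>_. R). (\<Prod>k\<in>K. c (t k)) * (\<Sum>k\<in>K. of_int (s k) * \<theta> (t k)) ^ p) \<in> \<int>"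
  using assms(1)
proof (induction K arbitrary: p rule: finite_induct)
  case empty
  then show ?case by simp
next
  case (insert j K)
  define C where "C t = (\<Prod>k\<in>K. c (t k))" for t
  define Y where "Y t = (\<Sum>k\<in>K. of_int (s k) * \<theta> (t k))" for t
  have "(\<Sum>t\<in>PiE (insert j K) (\<lambda>_. R). (\<Prod>k\<in>insert j K. c (t k)) * (\<Sum>k\<in>insert j K. of_int (s k) * \<theta> (t k)) ^ p)
      = (\<Sum>(r, t)\<in>R \<times> PiE K (\<lambda>_. R). (c r * C t) * (of_int (s j) * \<theta> r + Y t) ^ p)"
  proof (rule sym, rule sum.reindex_bij_witness[of _ "\<lambda>t. (t j, t(j := undefined))" "\<lambda>(r, t). t(j := r)"])
    have "(\<Prod>k\<in>K. c (if k = j then r else t k)) = C t"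
      and "(\<Sum>k\<in>K. of_int (s k) * \<theta> (if k = j then r else t k)) = Y t" for r t
      unfolding C_def Y_def using insert.hyps by (auto intro!: prod.cong sum.cong)
    then show "\<And>rt. rt \<in> R \<times> PiE K (\<lambda>_. R) \<Longrightarrow>
        (\<Prod>k\<in>insert j K. c ((case rt of (r, t) \<Rightarrow> t(j := r)) k)) *
        (\<Sum>k\<in>insert j K. of_int (s k) * \<theta> ((case rt of (r, t) \<Rightarrow> t(j := r)) k)) ^ p
      = (case rt of (r, t) \<Rightarrow> c r * C t * (of_int (s j) * \<theta> r + Y t) ^ p)"
      using insert.hyps by auto
  qed (use insert.hyps in \<open>auto simp: PiE_def extensional_def\<close>)
  also have "\<dots> = (\<Sum>i\<le>p. of_nat (p choose i) * of_int (s j ^ i) * (\<Sum>r\<in>R. c r * \<theta> r ^ i) *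
      (\<Sum>t\<in>PiE K (\<lambda>_. R). C t * Y t ^ (p - i)))"
    by (simp add: binomial_ring sum.cartesian_product[symmetric] sum_distrib_left sum_distrib_right
        power_mult_distrib mult_ac sum.swap[of _ "{..p}"])
  also have "\<dots> \<in> \<int>"
  proof (rule Ints_sum)
    have "(\<Sum>t\<in>PiE K (\<lambda>_. R). C t * Y t ^ q) \<in> \<int>" for q
      using insert.IH unfolding C_def Y_def .
    then show "of_nat (p choose i) * of_int (s j ^ i) * (\<Sum>r\<in>R. c r * \<theta> r ^ i) *
        (\<Sum>t\<in>PiE K (\<lambda>_. R). C t * Y t ^ (p - i)) \<in> \<int>" for i
      by (intro Ints_mult Ints_of_nat Ints_of_int moments)
  qed
  finally show ?case .
qed

lemma algebraic_nonzero_imp_root_of_int_poly: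
  fixes x :: "'a::field_char_0"
  assumes "algebraic x" "x \<noteq> 0"
  obtains p :: "int poly" where "poly p 0 \<noteq> 0" "poly (map_poly of_int p) x = 0"
proof -
  obtain p :: "int poly" where p: "p \<noteq> 0" "poly (map_poly of_int p) x = 0"
    using algebraicE'[OF assms(1)] by blast
  obtain q where q: "p = [:- 0, 1:] ^ order 0 p * q" "\<not> [:- 0, 1:] dvd q"
    using order_decomp[OF p(1)] by blast
  have "poly q 0 \<noteq> 0"
    using q(2) poly_eq_0_iff_dvd[of q 0] by simp
  moreover have "poly (map_poly of_int q) x = 0"
    using p(2) assms(2) by (subst (asm) q(1)) (simp add: hom_distribs)
  ultimately show ?thesis by (rule that)
qed

lemma sum_if_eq_0_in_Rats:
  fixes W D :: "'t \<Rightarrow> 'a::field_char_0"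
  assumes T: "finite T"
    and moments: "\<And>p. (\<Sum>t\<in>T. W t * D t ^ p) \<in> \<int>"
    and alg: "\<And>t. t \<in> T \<Longrightarrow> algebraic (D t)"
  shows "(\<Sum>t\<in>T. if D t = 0 then W t else 0) \<in> \<rat>"
proof -
  define T' where "T' = {t \<in> T. D t \<noteq> 0}"
  have "\<exists>p :: int poly. poly p 0 \<noteq> 0 \<and> poly (map_poly of_int p) (D t) = 0" if "t \<in> T'" for t
    using that alg algebraic_nonzero_imp_root_of_int_poly unfolding T'_def by (metis (mono_tags) mem_Collect_eq)
  then obtain p :: "'t \<Rightarrow> int poly" where
    p: "\<And>t. t \<in> T' \<Longrightarrow> poly (p t) 0 \<noteq> 0" "\<And>t. t \<in> T' \<Longrightarrow> poly (map_poly of_int (p t)) (D t) = 0"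
    by metis
  define g :: "'a poly" where "g = map_poly of_int (\<Prod>t\<in>T'. p t)"
  have "finite T'"
    using T unfolding T'_def by simp
  have g0: "poly g 0 = of_int (\<Prod>t\<in>T'. poly (p t) 0)"
    using of_int_hom.poly_map_poly[of "\<Prod>t\<in>T'. p t" 0] by (simp add: g_def poly_prod)
  have g0_int: "poly g 0 \<in> \<int>"
    unfolding g0 by (rule Ints_of_int)
  have g0_nonzero: "poly g 0 \<noteq> 0"
    unfolding g0 using p(1) \<open>finite T'\<close> by simp
  have g_vanishes: "poly g (D t) = 0" if "t \<in> T'" for t
    using \<open>finite T'\<close> p(2)[OF that] that by (auto simp: g_def hom_distribs poly_prod)
  have "(\<Sum>t\<in>T. W t * poly g (D t)) = (\<Sum>i\<le>degree g. coeff g i * (\<Sum>t\<in>T. W t * D t ^ i))"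
    by (simp add: poly_altdef sum_distrib_left sum_distrib_right mult_ac sum.swap[of _ T])
  also have "\<dots> \<in> \<int>"
    by (intro Ints_sum Ints_mult moments) (simp add: g_def coeff_map_poly)
  finally have "(\<Sum>t\<in>T. W t * poly g (D t)) \<in> \<int>" .
  moreover have "(\<Sum>t\<in>T. if D t = 0 then W t else 0) = (\<Sum>t\<in>T. W t * poly g (D t)) / poly g 0"
    unfolding sum_divide_distrib
    by (intro sum.cong refl) (use g0_nonzero g_vanishes in \<open>auto simp: T'_def\<close>)
  ultimately show ?thesis
    using g0_int by (simp add: Rats_divide Ints_subset_Rats[THEN subsetD])
qed

theorem theorem5p2:
  fixes adj :: "'n::finite \<Rightarrow> 'n \<Rightarrow> bool"
    and d :: nat and \<theta> :: "nat \<Rightarrow> real" and E :: "nat \<Rightarrow> real^'n^'n"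
    and w :: "'k::finite \<Rightarrow> real" and f :: "nat \<Rightarrow> 'k \<Rightarrow> int"
    and a b :: 'n and m :: nat
  assumes "simple_graph adj"
    and "spectral_decomposition (adjacency_matrix adj) d \<theta> E"
    and "rat_lin_indep w"
    and "\<forall>r\<le>d. \<theta> r = (\<Sum>l\<in>UNIV. real_of_int (f r l) * w l)"
    and "m \<ge> 1"
  shows "(1 / (2 * pi) ^ CARD('k)) *
           integral (cbox (0::real^'k) (\<chi> _. 2 * pi))
             (\<lambda>z. cmod (\<Sum>r\<le>d. complex_of_real (E r $ a $ b) *
                     exp (\<i> * complex_of_real (\<Sum>l\<in>UNIV. real_of_int (f r l) * z $ l))) ^ (2 * m))
         \<in> \<rat>"
proof -
  define T where "T = PiE {..<2*m} (\<lambda>_. {..d})"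
  define W where "W t = (\<Prod>k<2*m. E (t k) $ a $ b)" for t
  define D where "D t = (\<Sum>k<2*m. of_int (moment_sign m k) * \<theta> (t k))" for t
  have A_int: "adjacency_matrix adj $ x $ y \<in> \<int>" for x y
    by (simp add: adjacency_matrix_def)
  have "(1 / (2 * pi) ^ CARD('k)) * integral (cbox (0::real^'k) (\<chi> _. 2 * pi))
      (\<lambda>z. cmod (\<Sum>r\<le>d. complex_of_real (E r $ a $ b) *
         exp (\<i> * complex_of_real (\<Sum>l\<in>UNIV. real_of_int (f r l) * z $ l))) ^ (2 * m))
    = (\<Sum>t\<in>T. if D t = 0 then W t else 0)"
    unfolding T_def W_def D_def using assms(3,4)
    by (intro normalized_torus_moment_eq_resonant_sum) auto
  also have "\<dots> \<in> \<rat>"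
  proof (rule sum_if_eq_0_in_Rats)
    show "finite T"
      by (simp add: T_def finite_PiE)
    show "(\<Sum>t\<in>T. W t * D t ^ p) \<in> \<int>" for p
      unfolding T_def W_def D_def using spectral_decomposition_moment_in_Ints[OF assms(2) A_int]
      by (intro sum_PiE_prod_power_sum_in_Ints) auto
    show "algebraic (D t)" if "t \<in> T" for t
      unfolding D_def using that
      by (intro spectral_decomposition_algebraic_int_combination[OF assms(2) A_int]) (auto simp: T_def)
  qed
  finally show ?thesis .
qed

end
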